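(* Consider a transformer with $L$ layers and $H$ attention heads per layer, each head of dimension $d_h$. For a prompt $\rho$ of length $|\rho|$, let the query position be the last position, and for layer $\ell$ and head $h$ let $$\alpha_{ti}^{(\ell,h)}=\frac{\exp\left(q_t^{(\ell,h)\top}k_i^{(\ell,h)}/\sqrt{d_h}\right)}{\sum_{j=1}^{|\rho|}\exp\left(q_t^{(\ell,h)\top}k_j^{(\ell,h)}/\sqrt{d_h}\right)}$$ be the attention weights. Assume that for every prompt, every layer $\ell$, head $h$ and position $j$, $\|q_t^{(\ell,h)}\|\le Q_{\ell,h}$ and $\|k_j^{(\ell,h)}\|\le K_{\ell,h}$. Let $\mathsf{R}$ be a task-relevant set of $m$ token positions and define the averaged attention mass $$A(\rho)=\frac{1}{LH}\sum_{\ell=1}^{L}\sum_{h=1}^{H}\sum_{i\in\mathsf{R}}\alpha_{ti}^{(\ell,h)}.$$ Suppose feasibility of a prompt requires $A(\rho)\ge\tau$ for a given $\tau>0$, and let $|\rho|_{\mathrm{sat}}$ denote the supremum of lengths $|\rho|$ of prompts satisfying this requirement. Let $|\rho|_{\mathrm{feasible}}>0$ be the hardware-feasible prompt length. Then $$\Delta_{\rho}:=\frac{|\rho|_{\mathrm{sat}}}{|\rho|_{\mathrm{feasible}}}\le\frac{m}{\tau|\rho|_{\mathrm{feasible}}}\exp\left(\max_{\ell,h}\frac{2Q_{\ell,h}K_{\ell,h}}{\sqrt{d_h}}\right).$$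
   Context: $|\rho|_{\mathrm{feasible}}$ is an arbitrary positive number (in the paper, the maximal prompt length allowed by KV-cache memory); $|\rho|_{\mathrm{sat}}$ is the saturation length, i.e. the largest prompt length for which the attention-mass requirement $A(\rho)\ge\tau$ can hold. *)

theory Defs
  imports "HOL-Analysis.Analysis"
begin

definition attn_weight :: "real \<Rightarrow> 'v::real_inner \<Rightarrow> (nat \<Rightarrow> 'v) \<Rightarrow> nat \<Rightarrow> nat \<Rightarrow> real" where
  "attn_weight dh q k n i =
     exp (inner q (k i) / sqrt dh) / (\<Sum>j=1..n. exp (inner q (k j) / sqrt dh))"

text \<open>Averaged attention mass on the relevant set R for one prompt of length n:
q l h is the query (last position) of layer l, head h; k l h j the key at position j.\<close>
definition attn_mass :: "nat \<Rightarrow> nat \<Rightarrow> real \<Rightarrow> (nat \<Rightarrow> nat \<Rightarrow> 'v::real_inner)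
    \<Rightarrow> (nat \<Rightarrow> nat \<Rightarrow> nat \<Rightarrow> 'v) \<Rightarrow> nat \<Rightarrow> nat set \<Rightarrow> real" where
  "attn_mass L H dh q k n R =
     (1 / (real L * real H)) *
       (\<Sum>l=1..L. \<Sum>h=1..H. \<Sum>i\<in>R. attn_weight dh (q l h) (k l h) n i)"

definition sat_length :: "('p \<Rightarrow> nat) \<Rightarrow> ('p \<Rightarrow> real) \<Rightarrow> real \<Rightarrow> real" where
  "sat_length len A \<tau> =
     (if {p. \<tau> \<le> A p} = {} then 0 else Sup {real (len p) | p. \<tau> \<le> A p})"

end

theory Submission
  imports Defs
begin

text \<open>If every logit of a head lies in [-c, c], each softmax weight is at most
  exp c / (n exp (-c)) = exp (2c) / n, so m relevant positions carry mass at most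
  m exp (2c) / n. By Cauchy-Schwarz one may take 2c = max 2 Q K / sqrt dh; hence a prompt
  with mass at least \<tau> has length n \<le> m exp (2c) / \<tau>, and so has the supremum of such
  lengths.\<close>

lemma attn_weight_le:
  fixes q :: "'v::real_inner"
  assumes i: "i \<in> {1..n}"
    and logits: "\<And>j. j \<in> {1..n} \<Longrightarrow> \<bar>inner q (k j) / sqrt dh\<bar> \<le> c"
  shows "attn_weight dh q k n i \<le> exp (2 * c) / real n"
proof -
  have n: "n \<ge> 1" using i by simp
  have num: "exp (inner q (k i) / sqrt dh) \<le> exp c"
    using abs_le_D1[OF logits[OF i]] by simp
  have "(\<Sum>j=1..n. exp (- c)) \<le> (\<Sum>j=1..n. exp (inner q (k j) / sqrt dh))"
  proof (rule sum_mono)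
    fix j assume "j \<in> {1..n}"
    from abs_le_D2[OF logits[OF this]] have "- c \<le> inner q (k j) / sqrt dh" by simp
    then show "exp (- c) \<le> exp (inner q (k j) / sqrt dh)" by simp
  qed
  then have den: "real n * exp (- c) \<le> (\<Sum>j=1..n. exp (inner q (k j) / sqrt dh))"
    by simp
  have "attn_weight dh q k n i \<le> exp c / (real n * exp (- c))"
    unfolding attn_weight_def using num den n by (intro frac_le) auto
  also have "\<dots> = exp (2 * c) / real n"
    by (simp add: exp_minus field_simps flip: exp_add)
  finally show ?thesis .
qed

text \<open>No hypothesis n, L, H \<ge> 1 is needed: in the degenerate cases the mass is 0,
  via x / 0 = 0 and R = {}.\<close>

lemma attn_mass_le:
  assumes R: "R \<subseteq> {1..n}"
    and logits: "\<And>l h j. l \<in> {1..L} \<Longrightarrow> h \<in> {1..H} \<Longrightarrow> j \<in> {1..n} \<Longrightarrow>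
      \<bar>inner (q l h) (k l h j) / sqrt dh\<bar> \<le> c"
  shows "attn_mass L H dh q k n R \<le> real (card R) * exp (2 * c) / real n"
proof -
  define b where "b = real (card R) * exp (2 * c) / real n"
  have "(\<Sum>l=1..L. \<Sum>h=1..H. \<Sum>i\<in>R. attn_weight dh (q l h) (k l h) n i)
      \<le> (\<Sum>l=1..L. \<Sum>h=1..H. \<Sum>i\<in>R. exp (2 * c) / real n)"
    by (intro sum_mono attn_weight_le logits) (use R in auto)
  also have "\<dots> = real L * real H * b"
    unfolding b_def by simp
  finally have "attn_mass L H dh q k n R \<le> 1 / (real L * real H) * (real L * real H * b)"
    unfolding attn_mass_def by (intro mult_left_mono) auto
  also have "\<dots> \<le> b"
    by (cases "real L * real H = 0") (auto simp: b_def)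
  finally show ?thesis unfolding b_def .
qed

lemma logit_abs_le:
  fixes q k :: "'v::real_inner"
  assumes "norm q \<le> Q" and "norm k \<le> K" and "0 \<le> dh"
  shows "\<bar>inner q k / sqrt dh\<bar> \<le> Q * K / sqrt dh"
proof -
  have "\<bar>inner q k\<bar> \<le> norm q * norm k"
    by (rule Cauchy_Schwarz_ineq2)
  also have "\<dots> \<le> Q * K"
    using assms by (intro mult_mono) (auto intro: order_trans[OF norm_ge_zero])
  finally show ?thesis
    using assms(3) by (simp add: abs_div_pos divide_right_mono)
qed

lemma length_le_of_attn_mass_ge:
  assumes "\<tau> > 0" and "\<tau> \<le> real m * b / real n" and "0 \<le> b"
  shows "real n \<le> real m * b / \<tau>"
proof (cases "n = 0")
  case False
  with assms have "\<tau> * real n \<le> real m * b"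
    by (simp add: field_simps)
  with assms(1) show ?thesis
    by (simp add: field_simps)
qed (use assms in simp)

lemma sat_length_le:
  assumes "\<And>p. \<tau> \<le> A p \<Longrightarrow> real (len p) \<le> B" and "0 \<le> B"
  shows "sat_length len A \<tau> \<le> B"
  unfolding sat_length_def using assms by (auto intro: cSup_least)

theorem mainTheorem3:
  fixes L H m :: nat
    and len :: "'p \<Rightarrow> nat"
    and q :: "'p \<Rightarrow> nat \<Rightarrow> nat \<Rightarrow> 'v::euclidean_space"
    and k :: "'p \<Rightarrow> nat \<Rightarrow> nat \<Rightarrow> nat \<Rightarrow> 'v"
    and R :: "'p \<Rightarrow> nat set"
    and Q K :: "nat \<Rightarrow> nat \<Rightarrow> real"
    and \<tau> rho_feasible :: real
  assumes "L \<ge> 1" and "H \<ge> 1"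
    and "\<And>p. R p \<subseteq> {1..len p} \<and> card (R p) = m"
    and "\<And>p l h. l \<in> {1..L} \<Longrightarrow> h \<in> {1..H} \<Longrightarrow> norm (q p l h) \<le> Q l h"
    and "\<And>p l h j. l \<in> {1..L} \<Longrightarrow> h \<in> {1..H} \<Longrightarrow> j \<in> {1..len p} \<Longrightarrow> norm (k p l h j) \<le> K l h"
    and "\<tau> > 0" and "rho_feasible > 0"
  shows "sat_length len (\<lambda>p. attn_mass L H (real DIM('v)) (q p) (k p) (len p) (R p)) \<tau> / rho_feasible
    \<le> real m / (\<tau> * rho_feasible) *
       exp (Max {2 * Q l h * K l h / sqrt (real DIM('v)) | l h. l \<in> {1..L} \<and> h \<in> {1..H}})"
proof -
  note R = assms(3) and q_bound = assms(4) and k_bound = assms(5)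
  define A where "A p = attn_mass L H (real DIM('v)) (q p) (k p) (len p) (R p)" for p
  define M where "M = Max {2 * Q l h * K l h / sqrt (real DIM('v)) | l h. l \<in> {1..L} \<and> h \<in> {1..H}}"
  have head_le_M: "2 * Q l h * K l h / sqrt (real DIM('v)) \<le> M"
    if "l \<in> {1..L}" "h \<in> {1..H}" for l h
    unfolding M_def using that by (intro Max_ge finite_image_set2) auto
  have logits: "\<bar>inner (q p l h) (k p l h j) / sqrt (real DIM('v))\<bar> \<le> M / 2"
    if "l \<in> {1..L}" "h \<in> {1..H}" "j \<in> {1..len p}" for p l h j
  proof -
    have "\<bar>inner (q p l h) (k p l h j) / sqrt (real DIM('v))\<bar> \<le> Q l h * K l h / sqrt (real DIM('v))"
      using that by (intro logit_abs_le q_bound k_bound) auto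
    also have "\<dots> \<le> M / 2"
      using head_le_M[OF that(1,2)] by (simp add: mult.commute mult.left_commute)
    finally show ?thesis .
  qed
  have mass_le: "A p \<le> real m * exp (2 * (M / 2)) / real (len p)" for p
    using R[of p] unfolding A_def by (metis attn_mass_le logits)
  have "real (len p) \<le> real m * exp M / \<tau>" if "\<tau> \<le> A p" for p
    using mass_le[of p] that assms(6) by (intro length_le_of_attn_mass_ge) auto
  then have "sat_length len A \<tau> \<le> real m * exp M / \<tau>"
    using assms(6) by (intro sat_length_le) auto
  then have "sat_length len A \<tau> / rho_feasible \<le> real m * exp M / \<tau> / rho_feasible"
    by (rule divide_right_mono) (use assms(7) in simp)
  also have "\<dots> = real m / (\<tau> * rho_feasible) * exp M"
    by simp
  finally show ?thesis
    unfolding A_def M_def .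
qed

end
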